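(* Let $N>1$ be an integer and let data points $\{(x_n,y_n)\}_{n=0}^N\subset\mathbb{R}^2$ with $0=x_0<x_1<\dots<x_N=1$ be given. Let $a\in\mathbb{R}$ with $|a|<1$, and for $n=1,\dots,N$ let $g_n:[0,1]\to\mathbb{R}$ be continuous. Define $w_n(x,y)=(L_n(x),F_n(x,y))$ with $L_n(x)=\frac{x+n-1}{N}$ and $F_n(x,y)=ay+g_n(x)$, and assume $L_n(x_0)=x_{n-1}$, $L_n(x_N)=x_n$, $F_n(x_0,y_0)=y_{n-1}$, $F_n(x_N,y_N)=y_n$ for all $n=1,\dots,N$. Let $f^*:[0,1]\to\mathbb{R}$ be the continuous function that interpolates the data (i.e. $f^*(x_n)=y_n$) and whose graph is the attractor of the IFS $F=(\mathbb{R}^2;w_1,\dots,w_N)$. Define $g$ by $$g(x)=\begin{cases} g_n(L_n^{-1}(x)) & \text{if } x\in[x_{n-1},x_n),\ n=1,\dots,N,\\ g_N(1) & \text{if } x=1,\\ g(x-1) & \text{if } x\in(1,\infty).\end{cases}$$ Then $f^*$ is the unique solution of the functional equation $f(x)-af(Nx)=g(x)$ in the space $L^\infty(\mathbb{R})\cap L^2([0,1])\cap\mathcal{P}$.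
   Context: $\mathcal{P}$ denotes the set of functions on $\mathbb{R}$ of period $1$; $L^\infty(\mathbb{R})\cap L^2([0,1])\cap\mathcal{P}$ is the space of essentially bounded period-1 functions on $\mathbb{R}$ (square integrable on $[0,1]$), with functions identified when equal almost everywhere; $f^*$ and $g$ are regarded as elements of this space via their period-1 extensions, and uniqueness is up to equality almost everywhere. The attractor of an IFS $(\mathbb{R}^2;w_1,\dots,w_N)$ is the unique nonempty compact set $A$ with $A=\bigcup_{n=1}^N w_n(A)$; under the stated assumptions it exists and is the graph of a continuous function on $[0,1]$ interpolating the data. *)

theory Defs
  imports "HOL-Analysis.Analysis"
begin

definition ifs_L :: "nat \<Rightarrow> nat \<Rightarrow> real \<Rightarrow> real" where
  "ifs_L N n x = (x + real n - 1) / real N"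

definition ifs_F :: "real \<Rightarrow> (nat \<Rightarrow> real \<Rightarrow> real) \<Rightarrow> nat \<Rightarrow> real \<Rightarrow> real \<Rightarrow> real" where
  "ifs_F a gs n x y = a * y + gs n x"

definition ifs_w :: "nat \<Rightarrow> real \<Rightarrow> (nat \<Rightarrow> real \<Rightarrow> real) \<Rightarrow> nat \<Rightarrow> real \<times> real \<Rightarrow> real \<times> real" where
  "ifs_w N a gs n p = (ifs_L N n (fst p), ifs_F a gs n (fst p) (snd p))"

definition is_attractor :: "(nat \<Rightarrow> 'a::metric_space \<Rightarrow> 'a) \<Rightarrow> nat set \<Rightarrow> 'a set \<Rightarrow> bool" where
  "is_attractor W I A \<longleftrightarrow>
     A \<noteq> {} \<and> compact A \<and> A = (\<Union>i\<in>I. W i ` A) \<and>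
     (\<forall>B. B \<noteq> {} \<and> compact B \<and> B = (\<Union>i\<in>I. W i ` B) \<longrightarrow> B = A)"

text \<open>g on [0,1): g_n(L_n^{-1}(x)) for x in [x_{n-1}, x_n); L_n^{-1}(x) = N x - n + 1.\<close>
definition g_piece :: "nat \<Rightarrow> (nat \<Rightarrow> real) \<Rightarrow> (nat \<Rightarrow> real \<Rightarrow> real) \<Rightarrow> real \<Rightarrow> real" where
  "g_piece N xs gs x =
     (let n = (THE n. 1 \<le> n \<and> n \<le> N \<and> xs (n - 1) \<le> x \<and> x < xs n)
      in gs n (real N * x - real n + 1))"

text \<open>The function g of the paper: g_piece on [0,1), g_N(1) at 1, g(x) = g(x-1) for x > 1;
  regarded as a period-1 function on the whole real line.\<close>
definition g_fun :: "nat \<Rightarrow> (nat \<Rightarrow> real) \<Rightarrow> (nat \<Rightarrow> real \<Rightarrow> real) \<Rightarrow> real \<Rightarrow> real" where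
  "g_fun N xs gs x =
     (if x < 0 then g_piece N xs gs (frac x)
      else if x < 1 then g_piece N xs gs x
      else (let t = x - (of_int \<lceil>x\<rceil> - 1) in
            if t = 1 then gs N 1 else g_piece N xs gs t))"

definition per_ext :: "(real \<Rightarrow> real) \<Rightarrow> real \<Rightarrow> real" where
  "per_ext f x = f (frac x)"

text \<open>The space L^\<infinity>(R) \<inter> L^2([0,1]) \<inter> P (representatives; equality a.e. handled in statement).\<close>
definition LinfL2P :: "(real \<Rightarrow> real) set" where
  "LinfL2P = {f. f \<in> borel_measurable lebesgue \<and>
                 (\<exists>B. AE x in lebesgue. \<bar>f x\<bar> \<le> B) \<and>
                 set_integrable lebesgue {0..1} (\<lambda>x. (f x)\<^sup>2) \<and>
                 (\<forall>x. f (x + 1) = f x)}"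

end

theory Submission
  imports Defs
begin

text \<open>Invariance of the attractor gives the self-affinity
  \<open>f\<^sup>*(L\<^sub>n t) = a f\<^sup>*(t) + g\<^sub>n(t)\<close>; since the nodes are forced to be equidistant,
  \<open>L\<^sub>n\<close> is the inverse of \<open>x \<mapsto> N x\<close> on \<open>[x\<^sub>n\<^sub>-\<^sub>1, x\<^sub>n)\<close>, and this is exactly the
  functional equation \<open>f(x) - a f(N x) = g(x)\<close> for the periodic extension, away from the
  null set \<open>\<int>\<close>. For uniqueness, the difference \<open>h\<close> of two bounded solutions satisfies
  \<open>h(x) = a h(N x)\<close> a.e.; iterating along the scalings \<open>x \<mapsto> N x\<close>, which preserve
  null sets, gives \<open>|h| \<le> |a|\<^sup>k \<parallel>h\<parallel>\<^sub>\<infinity>\<close> a.e. for every \<open>k\<close>, so \<open>h = 0\<close> a.e.\<close>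

lemma AE_lebesgue_scaleR:
  fixes P :: "'a::euclidean_space \<Rightarrow> bool"
  assumes "AE x in lebesgue. P x" and "c \<noteq> 0"
  shows "AE x in lebesgue. P (c *\<^sub>R x)"
proof -
  obtain S where S: "S \<in> null_sets lebesgue" "{x. \<not> P x} \<subseteq> S"
    using assms(1) by (auto simp: eventually_ae_filter)
  have "negligible ((\<lambda>x. inverse c *\<^sub>R x) ` S)"
    using S by (intro negligible_differentiable_image_negligible)
       (auto simp: negligible_iff_null_sets)
  moreover have "{x. \<not> P (c *\<^sub>R x)} \<subseteq> (\<lambda>x. inverse c *\<^sub>R x) ` S"
  proof
    fix x assume "x \<in> {x. \<not> P (c *\<^sub>R x)}"
    then have "c *\<^sub>R x \<in> S" using S(2) by auto
    then show "x \<in> (\<lambda>x. inverse c *\<^sub>R x) ` S"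
      by (rule rev_image_eqI) (simp add: assms(2))
  qed
  ultimately show ?thesis
    by (auto simp: eventually_ae_filter negligible_iff_null_sets)
qed

lemma AE_lebesgue_not_Ints: "AE x in lebesgue. (x::real) \<notin> \<int>"
proof -
  have "(\<int>::real set) \<in> null_sets lebesgue"
    by (simp add: countable_imp_null_set_lborel countable_int null_sets_completionI)
  then show ?thesis
    unfolding eventually_ae_filter by blast
qed

lemma AE_eq_0_if_scaling_contraction:
  fixes h :: "'a::euclidean_space \<Rightarrow> 'b::real_normed_vector"
  assumes a: "\<bar>a\<bar> < 1" and c: "c \<noteq> 0"
    and bounded: "AE x in lebesgue. norm (h x) \<le> B"
    and scaling: "AE x in lebesgue. h x = a *\<^sub>R h (c *\<^sub>R x)"
  shows "AE x in lebesgue. h x = 0"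
proof -
  have iterated: "AE x in lebesgue. norm (h x) \<le> \<bar>a\<bar> ^ k * B" for k
  proof (induction k)
    case 0
    show ?case using bounded by simp
  next
    case (Suc k)
    have "AE x in lebesgue. norm (h (c *\<^sub>R x)) \<le> \<bar>a\<bar> ^ k * B"
      using AE_lebesgue_scaleR[OF Suc c] .
    with scaling show ?case
    proof eventually_elim
      case (elim x)
      have "norm (h x) = \<bar>a\<bar> * norm (h (c *\<^sub>R x))"
        using elim(1) by simp
      also have "\<dots> \<le> \<bar>a\<bar> * (\<bar>a\<bar> ^ k * B)"
        using elim(2) by (intro mult_left_mono) auto
      finally show ?case by simp
    qed
  qed
  have "AE x in lebesgue. \<forall>k. norm (h x) \<le> \<bar>a\<bar> ^ k * B"
    using iterated by (simp add: AE_all_countable)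
  then show ?thesis
  proof eventually_elim
    case (elim x)
    have "(\<lambda>k. \<bar>a\<bar> ^ k * B) \<longlonglongrightarrow> 0"
      using a by (intro tendsto_mult_left_zero LIMSEQ_power_zero) simp
    then have "norm (h x) \<le> 0"
      using elim by (intro LIMSEQ_le_const) auto
    then show ?case by simp
  qed
qed

lemma AE_eq_if_bounded_solutions:
  fixes f p g :: "real \<Rightarrow> real"
  assumes a: "\<bar>a\<bar> < 1" and c: "c \<noteq> 0"
    and f_bounded: "AE x in lebesgue. \<bar>f x\<bar> \<le> B"
    and p_bounded: "AE x in lebesgue. \<bar>p x\<bar> \<le> M"
    and f_eq: "AE x in lebesgue. f x - a * f (c * x) = g x"
    and p_eq: "AE x in lebesgue. p x - a * p (c * x) = g x"
  shows "AE x in lebesgue. f x = p x"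
proof -
  have "AE x in lebesgue. f x - p x = 0"
  proof (rule AE_eq_0_if_scaling_contraction[OF a c])
    show "AE x in lebesgue. norm (f x - p x) \<le> B + M"
      using f_bounded p_bounded
    proof eventually_elim
      case (elim x)
      have "\<bar>f x - p x\<bar> \<le> \<bar>f x\<bar> + \<bar>p x\<bar>"
        by (rule abs_triangle_ineq4)
      then show ?case
        using elim by simp
    qed
    show "AE x in lebesgue. f x - p x = a *\<^sub>R (f (c *\<^sub>R x) - p (c *\<^sub>R x))"
      using f_eq p_eq by eventually_elim (simp add: algebra_simps)
  qed
  then show ?thesis by simp
qed

lemma per_ext_periodic: "per_ext f (x + 1) = per_ext f x"
  by (simp add: per_ext_def frac_1_eq)

lemma per_ext_of_nat_mult_frac: "per_ext f (of_nat N * frac x) = per_ext f (of_nat N * x)"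
proof -
  have "of_nat N * x = of_nat N * frac x + of_int (int N * \<lfloor>x\<rfloor>)"
    by (simp add: frac_def algebra_simps)
  then have "frac (of_nat N * x) = frac (of_nat N * frac x)"
    by (simp only: frac_add_of_int_right)
  then show ?thesis
    unfolding per_ext_def by simp
qed

lemma borel_measurable_per_ext:
  assumes "continuous_on {0..1} f"
  shows "per_ext f \<in> borel_measurable borel"
proof -
  define clamp where "clamp y = max 0 (min 1 y)" for y :: real
  have "continuous_on UNIV (f \<circ> clamp)"
    unfolding clamp_def
    by (intro continuous_on_compose continuous_intros continuous_on_subset[OF assms]) auto
  moreover have "(\<lambda>x. x - real_of_int \<lfloor>x\<rfloor>) \<in> borel_measurable borel"
    by measurable
  ultimately have "(\<lambda>x. (f \<circ> clamp) (x - real_of_int \<lfloor>x\<rfloor>)) \<in> borel_measurable borel"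
    by (rule borel_measurable_continuous_on)
  moreover have "(\<lambda>x. (f \<circ> clamp) (x - real_of_int \<lfloor>x\<rfloor>)) = per_ext f"
    by (auto simp: per_ext_def frac_def[symmetric] clamp_def less_imp_le[OF frac_lt_1])
  ultimately show ?thesis by simp
qed

lemma bounded_per_ext:
  assumes "continuous_on {0..1} f"
  shows "\<exists>M. \<forall>x. \<bar>per_ext f x\<bar> \<le> M"
proof -
  obtain M where "\<And>t. t \<in> {0..1} \<Longrightarrow> \<bar>f t\<bar> \<le> M"
    using compact_imp_bounded[OF compact_continuous_image[OF assms compact_Icc]]
    unfolding bounded_iff by (auto simp del: atLeastAtMost_iff)
  then have "\<bar>per_ext f x\<bar> \<le> M" for x
    using frac_lt_1[of x] by (simp add: per_ext_def)
  then show ?thesis by blast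
qed

lemma per_ext_in_LinfL2P:
  assumes "continuous_on {0..1} f"
  shows "per_ext f \<in> LinfL2P"
proof -
  obtain M where M: "\<And>x. \<bar>per_ext f x\<bar> \<le> M"
    using bounded_per_ext[OF assms] by blast
  have meas: "per_ext f \<in> borel_measurable lebesgue"
    using borel_measurable_per_ext[OF assms] by (metis measurable_lborel2 measurable_completion)
  have "set_integrable lebesgue {0..1} (\<lambda>x. (per_ext f x)\<^sup>2)"
    unfolding set_integrable_def
  proof (rule integrableI_bounded_set[where A="{0..1}" and B="M\<^sup>2"])
    show "AE x in lebesgue. x \<in> {0..1} \<longrightarrow>
            norm (indicat_real {0..1} x *\<^sub>R (per_ext f x)\<^sup>2) \<le> M\<^sup>2"
    proof (intro AE_I2 impI)
      fix x
      have "\<bar>per_ext f x\<bar>\<^sup>2 \<le> M\<^sup>2"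
        using M[of x] by (intro power_mono) auto
      then show "norm (indicat_real {0..1} x *\<^sub>R (per_ext f x)\<^sup>2) \<le> M\<^sup>2"
        by (simp add: indicator_def)
    qed
    show "(\<lambda>x. indicat_real {0..1} x *\<^sub>R (per_ext f x)\<^sup>2) \<in> borel_measurable lebesgue"
      by (intro borel_measurable_scaleR borel_measurable_indicator borel_measurable_power meas) simp
  qed (auto simp: indicator_def)
  with meas M show ?thesis
    unfolding LinfL2P_def by (auto simp: per_ext_periodic)
qed

lemma attractor_graph_self_affine:
  assumes "is_attractor (ifs_w N a gs) I ((\<lambda>x. (x, f x)) ` {0..1})"
    and "n \<in> I" and "t \<in> {0..1}"
  shows "f (ifs_L N n t) = a * f t + gs n t"
proof -
  let ?A = "(\<lambda>x. (x, f x)) ` {0..1}"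
  have "?A = (\<Union>i\<in>I. ifs_w N a gs i ` ?A)"
    using assms(1) unfolding is_attractor_def by blast
  then have "ifs_w N a gs n (t, f t) \<in> ?A"
    using assms(2,3) by blast
  then show ?thesis
    by (auto simp: ifs_w_def ifs_F_def)
qed

lemma nodes_equidistant:
  assumes "xs 0 = 0" and "xs N = 1"
    and "\<And>n. n \<in> {1..N} \<Longrightarrow> ifs_L N n (xs N) = xs n"
    and "n \<le> N"
  shows "xs n = real n / real N"
  using assms by (cases "n = 0") (auto simp: ifs_L_def)

lemma g_piece_equidistant:
  assumes "N > 0" and nodes: "\<And>n. n \<le> N \<Longrightarrow> xs n = real n / real N"
    and x: "0 \<le> x" "x < 1"
  shows "g_piece N xs gs x = gs (nat \<lfloor>real N * x\<rfloor> + 1) (frac (real N * x))"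
proof -
  have N: "real N > 0"
    using \<open>N > 0\<close> by simp
  define k where "k = nat \<lfloor>real N * x\<rfloor>"
  have "real k = of_int \<lfloor>real N * x\<rfloor>"
    using x N unfolding k_def by simp
  then have k: "real k \<le> real N * x" "real N * x < real k + 1"
    by linarith+
  have "(THE n. 1 \<le> n \<and> n \<le> N \<and> xs (n - 1) \<le> x \<and> x < xs n) = k + 1"
  proof (rule the_equality)
    have "real N * x < real N" using x N by simp
    then have "k < N" using k by linarith
    then show "1 \<le> k + 1 \<and> k + 1 \<le> N \<and> xs (k + 1 - 1) \<le> x \<and> x < xs (k + 1)"
      using k N by (simp add: nodes field_simps)
  next
    fix m assume "1 \<le> m \<and> m \<le> N \<and> xs (m - 1) \<le> x \<and> x < xs m"
    then have m: "1 \<le> m" "m \<le> N" and "xs (m - 1) \<le> x" "x < xs m"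
      by auto
    then have "real (m - 1) / real N \<le> x" "x < real m / real N"
      using nodes[of "m - 1"] nodes[of m] by simp_all
    then have "real m - 1 \<le> real N * x" "real N * x < real m"
      using m N by (simp_all add: field_simps)
    then have "\<lfloor>real N * x\<rfloor> = int m - 1"
      by (simp add: floor_eq_iff)
    then show "m = k + 1"
      using m unfolding k_def by auto
  qed
  moreover have "real N * x - real k + 1 - 1 = frac (real N * x)"
    using x by (simp add: k_def frac_def)
  ultimately show ?thesis
    unfolding g_piece_def Let_def k_def by simp
qed

lemma g_fun_eq_g_piece_frac:
  assumes "x \<notin> \<int>"
  shows "g_fun N xs gs x = g_piece N xs gs (frac x)"
proof -
  have "x \<noteq> of_int \<lfloor>x\<rfloor>"
    using assms Ints_of_int by metis
  then have "x - (real_of_int \<lceil>x\<rceil> - 1) = frac x"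
    by (simp add: frac_def ceiling_altdef)
  then show ?thesis
    using assms frac_lt_1[of x] by (auto simp: g_fun_def Let_def)
qed

lemma per_ext_functional_equation:
  assumes "N > 0" and nodes: "\<And>n. n \<le> N \<Longrightarrow> xs n = real n / real N"
    and self_affine: "\<And>n t. n \<in> {1..N} \<Longrightarrow> t \<in> {0..1} \<Longrightarrow>
                        f (ifs_L N n t) = a * f t + gs n t"
    and x: "x \<notin> \<int>"
  shows "per_ext f x - a * per_ext f (real N * x) = g_fun N xs gs x"
proof -
  define y where "y = frac x"
  have y: "0 \<le> y" "y < 1"
    unfolding y_def using frac_lt_1 by auto
  have N: "real N > 0"
    using \<open>N > 0\<close> by simp
  define k where "k = nat \<lfloor>real N * y\<rfloor>"
  define t where "t = frac (real N * y)"
  have "\<lfloor>real N * y\<rfloor> < int N" "0 \<le> \<lfloor>real N * y\<rfloor>"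
    using y N by (simp_all add: floor_less_iff)
  then have "k + 1 \<in> {1..N}"
    unfolding k_def by (simp add: Suc_le_eq nat_less_iff)
  moreover have "t \<in> {0..1}"
    unfolding t_def using frac_lt_1 by (auto intro: less_imp_le)
  moreover have "ifs_L N (k + 1) t = y"
    using y N unfolding ifs_L_def t_def k_def frac_def by (simp add: field_simps)
  ultimately have "f y = a * f t + gs (k + 1) t"
    using self_affine by metis
  moreover have "per_ext f x = f y" "per_ext f (real N * x) = f t"
    using y per_ext_of_nat_mult_frac[of f N x]
    by (simp_all add: per_ext_def y_def t_def)
  moreover have "g_fun N xs gs x = gs (k + 1) t"
    using g_fun_eq_g_piece_frac[OF x] g_piece_equidistant[OF \<open>N > 0\<close> nodes y]
    by (simp add: y_def k_def t_def)
  ultimately show ?thesis by simp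
qed

theorem theorem4p1:
  fixes N :: nat and xs ys :: "nat \<Rightarrow> real" and a :: real
    and gs :: "nat \<Rightarrow> real \<Rightarrow> real" and fstar :: "real \<Rightarrow> real"
  assumes N_gt: "N > 1"
    and x0: "xs 0 = 0" and xN: "xs N = 1"
    and x_mono: "\<And>n. n < N \<Longrightarrow> xs n < xs (Suc n)"
    and a_lt: "\<bar>a\<bar> < 1"
    and g_cont: "\<And>n. n \<in> {1..N} \<Longrightarrow> continuous_on {0..1} (gs n)"
    and L_left: "\<And>n. n \<in> {1..N} \<Longrightarrow> ifs_L N n (xs 0) = xs (n - 1)"
    and L_right: "\<And>n. n \<in> {1..N} \<Longrightarrow> ifs_L N n (xs N) = xs n"
    and F_left: "\<And>n. n \<in> {1..N} \<Longrightarrow> ifs_F a gs n (xs 0) (ys 0) = ys (n - 1)"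
    and F_right: "\<And>n. n \<in> {1..N} \<Longrightarrow> ifs_F a gs n (xs N) (ys N) = ys n"
    and f_cont: "continuous_on {0..1} fstar"
    and f_interp: "\<And>n. n \<le> N \<Longrightarrow> fstar (xs n) = ys n"
    and f_attr: "is_attractor (ifs_w N a gs) {1..N} ((\<lambda>x. (x, fstar x)) ` {0..1})"
  shows "per_ext fstar \<in> LinfL2P
         \<and> (AE x in lebesgue. per_ext fstar x - a * per_ext fstar (real N * x) = g_fun N xs gs x)
         \<and> (\<forall>f \<in> LinfL2P.
              (AE x in lebesgue. f x - a * f (real N * x) = g_fun N xs gs x)
              \<longrightarrow> (AE x in lebesgue. f x = per_ext fstar x))"
proof -
  let ?p = "per_ext fstar" and ?g = "g_fun N xs gs"
  have "N > 0"
    using N_gt by simp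
  have nodes: "\<And>n. n \<le> N \<Longrightarrow> xs n = real n / real N"
    using nodes_equidistant[OF x0 xN L_right] .
  have self_affine: "\<And>n t. n \<in> {1..N} \<Longrightarrow> t \<in> {0..1} \<Longrightarrow>
                       fstar (ifs_L N n t) = a * fstar t + gs n t"
    using attractor_graph_self_affine[OF f_attr] .
  have solution: "AE x in lebesgue. ?p x - a * ?p (real N * x) = ?g x"
    using AE_lebesgue_not_Ints
    by eventually_elim (rule per_ext_functional_equation[where f = fstar, OF \<open>N > 0\<close> nodes self_affine])
  have unique: "AE x in lebesgue. f x = ?p x"
    if "f \<in> LinfL2P" and "AE x in lebesgue. f x - a * f (real N * x) = ?g x" for f
  proof -
    obtain B where B: "AE x in lebesgue. \<bar>f x\<bar> \<le> B"
      using \<open>f \<in> LinfL2P\<close> unfolding LinfL2P_def by auto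
    obtain M where M: "\<And>x. \<bar>?p x\<bar> \<le> M"
      using bounded_per_ext[OF f_cont] by blast
    show ?thesis
      using AE_eq_if_bounded_solutions[OF a_lt _ B AE_I2[OF M] that(2) solution] N_gt by simp
  qed
  show ?thesis
    using per_ext_in_LinfL2P[OF f_cont] solution unique by blast
qed

end
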